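(* Let $C_5$ be a spherical pentagon on $\mathbb{S}^2$ with vertices $\mathbf{p}_1,\dots,\mathbf{p}_5$ in cyclic order, all of whose five sides have length $\pi/3$, triangulated by the diagonals $\mathbf{p}_1\mathbf{p}_3$ and $\mathbf{p}_1\mathbf{p}_4$, both of length greater than $\pi/3$, into the triangles $\mathbf{p}_1\mathbf{p}_2\mathbf{p}_3$, $\mathbf{p}_1\mathbf{p}_3\mathbf{p}_4$, $\mathbf{p}_1\mathbf{p}_4\mathbf{p}_5$. Let $\alpha$ and $\beta$ be the angles at $\mathbf{p}_2$ in $\mathbf{p}_1\mathbf{p}_2\mathbf{p}_3$ and at $\mathbf{p}_5$ in $\mathbf{p}_1\mathbf{p}_4\mathbf{p}_5$, respectively; let $\alpha'$ and $\beta'$ be the angles at $\mathbf{p}_1$ in $\mathbf{p}_1\mathbf{p}_2\mathbf{p}_3$ and in $\mathbf{p}_1\mathbf{p}_4\mathbf{p}_5$, respectively; and let $\omega$ be the angle at $\mathbf{p}_1$ in $\mathbf{p}_1\mathbf{p}_3\mathbf{p}_4$ (opposite its side $\mathbf{p}_3\mathbf{p}_4$ of length $\pi/3$). If $\alpha,\beta\in\{2\pi-k\arccos(1/3): k=3,4\}$, then $\alpha'+\beta'+\omega\notin\{2\pi-k\arccos(1/3): k=1,2,3,4\}$.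
   Context: $\mathbb{S}^2$ is the unit sphere in $\mathbb{E}^3$ with spherical (geodesic) distance; sides are great-circle arcs. $\arccos(1/3)$ is the angle of a spherical equilateral triangle of side length $\pi/3$. *)

theory Defs
  imports "HOL-Analysis.Analysis"
begin

definition S2 :: "(real^3) set" where
  "S2 = sphere 0 1"

definition sph_dist :: "real^3 \<Rightarrow> real^3 \<Rightarrow> real" where
  "sph_dist x y = arccos (x \<bullet> y)"

definition vec_angle :: "real^3 \<Rightarrow> real^3 \<Rightarrow> real" where
  "vec_angle u v = arccos ((u \<bullet> v) / (norm u * norm v))"

text \<open>Interior angle at vertex b of the spherical triangle a b c: the angle between
  the tangent vectors at b of the great-circle arcs from b to a and from b to c.\<close>
definition sph_angle :: "real^3 \<Rightarrow> real^3 \<Rightarrow> real^3 \<Rightarrow> real" where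
  "sph_angle a b c = vec_angle (a - (a \<bullet> b) *\<^sub>R b) (c - (c \<bullet> b) *\<^sub>R b)"

end

theory Submission
  imports Defs
begin

text \<open>All sides have cosine \<open>1/2\<close>, so the spherical law of cosines at \<open>p2\<close> gives
  \<open>cos \<alpha> = (4a - 1)/3\<close> for the diagonal cosine \<open>a = p1 \<bullet> p3\<close>; as
  \<open>cos (k arccos (1/3))\<close> is \<open>-23/27\<close> or \<open>17/81\<close> for \<open>k = 3, 4\<close>, this forces
  \<open>a \<in> {-7/18, 11/27}\<close>, and likewise for \<open>b = p1 \<bullet> p4\<close>. The three angles at \<open>p1\<close> are then
  explicit in \<open>a\<close> and \<open>b\<close>, with cosines and sines that are square roots of rationals. In each
  of the four cases the cosine of their sum is computed exactly or bounded, and it misses the four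
  values \<open>cos (k arccos (1/3)) = 1/3, -7/9, -23/27, 17/81\<close>.\<close>

lemma abs_inner_div_norms_le_1:
  fixes u v :: "'a::real_inner"
  shows "\<bar>(u \<bullet> v) / (norm u * norm v)\<bar> \<le> 1"
proof (cases "norm u * norm v = 0")
  case False
  then have "norm u * norm v > 0"
    by (simp add: order_le_neq_trans)
  then show ?thesis
    using Cauchy_Schwarz_ineq2[of u v] by (simp add: abs_divide divide_le_eq_1)
qed auto

lemma vec_angle_bounds: "0 \<le> vec_angle u v" "vec_angle u v \<le> pi"
  using abs_inner_div_norms_le_1[of u v] unfolding vec_angle_def abs_le_iff
  by (auto intro: arccos_lbound arccos_ubound)

lemma cos_vec_angle: "cos (vec_angle u v) = (u \<bullet> v) / (norm u * norm v)"
  unfolding vec_angle_def by (rule cos_arccos_abs[OF abs_inner_div_norms_le_1])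

lemma cos_sph_dist:
  assumes "norm p = 1" "norm q = 1"
  shows "cos (sph_dist p q) = p \<bullet> q"
  unfolding sph_dist_def using abs_inner_div_norms_le_1[of p q] assms by simp

lemma inner_eq_half_if_sph_dist_eq_pi_div_3:
  assumes "norm p = 1" "norm q = 1" "sph_dist p q = pi/3"
  shows "p \<bullet> q = 1/2"
  using cos_sph_dist[OF assms(1,2)] assms(3) by (simp add: cos_60)

lemma sph_angle_bounds: "0 \<le> sph_angle a b c" "sph_angle a b c \<le> pi"
  unfolding sph_angle_def by (rule vec_angle_bounds)+

lemma sph_angle_commute: "sph_angle a b c = sph_angle c b a"
  unfolding sph_angle_def vec_angle_def by (simp add: inner_commute mult.commute)

lemma norm_tangent_component:
  fixes a b :: "'a::real_inner"
  assumes "norm a = 1" "norm b = 1"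
  shows "norm (a - (a \<bullet> b) *\<^sub>R b) = sqrt (1 - (a \<bullet> b)^2)"
  using assms unfolding norm_eq_sqrt_inner
  by (simp add: inner_diff_left inner_diff_right inner_commute power2_eq_square)

lemma cos_sph_angle:
  assumes "norm a = 1" "norm b = 1" "norm c = 1"
  shows "cos (sph_angle a b c) =
    (a \<bullet> c - (a \<bullet> b) * (c \<bullet> b)) / (sqrt (1 - (a \<bullet> b)^2) * sqrt (1 - (c \<bullet> b)^2))"
proof -
  have "b \<bullet> b = 1"
    using assms(2) by (simp add: norm_eq_1)
  then have "(a - (a \<bullet> b) *\<^sub>R b) \<bullet> (c - (c \<bullet> b) *\<^sub>R b) = a \<bullet> c - (a \<bullet> b) * (c \<bullet> b)"
    by (simp add: inner_diff_left inner_diff_right inner_commute algebra_simps)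
  then show ?thesis
    unfolding sph_angle_def cos_vec_angle
    by (simp add: norm_tangent_component assms)
qed

lemma cos_multiples_arccos_one_third:
  defines "K \<equiv> arccos (1/3)"
  shows "cos K = 1/3" "cos (2*K) = -7/9" "cos (3*K) = -23/27" "cos (4*K) = 17/81"
proof -
  show c1: "cos K = 1/3"
    unfolding K_def by simp
  show c2: "cos (2*K) = -7/9"
    by (simp add: cos_double_cos c1 power2_eq_square)
  have s: "(sin K)^2 = 8/9"
    by (simp add: sin_squared_eq c1 power_divide)
  have "cos (3*K) = cos (2*K) * cos K - 2 * (sin K)^2 * cos K"
    using cos_add[of "2*K" K] sin_double[of K] by (simp add: power2_eq_square algebra_simps)
  then show "cos (3*K) = -23/27"
    by (simp add: s c1 c2)
  have "cos (4*K) = 2 * cos (2*K) ^ 2 - 1"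
    using cos_double_cos[of "2*K"] by simp
  then show "cos (4*K) = 17/81"
    by (simp add: c2 power2_eq_square)
qed

lemma cos_of_special_angle:
  assumes "x \<in> {2*pi - real k * arccos (1/3) | k. k \<in> {1,2,3,4}}"
  shows "cos x \<in> {1/3, -7/9, -23/27, 17/81}"
  using assms cos_multiples_arccos_one_third by auto

lemma cos_apex_angle:
  assumes "norm p = 1" "norm q = 1" "norm r = 1" "p \<bullet> q = 1/2" "q \<bullet> r = 1/2"
  shows "cos (sph_angle p q r) = (4 * (p \<bullet> r) - 1) / 3"
  using cos_sph_angle[OF assms(1-3)] assms(4,5)
  by (simp add: inner_commute power2_eq_square field_simps)

lemma cos_base_angle:
  assumes "norm p = 1" "norm q = 1" "norm r = 1" "p \<bullet> q = 1/2" "q \<bullet> r = 1/2"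
    and "\<bar>p \<bullet> r\<bar> < 1"
  shows "cos (sph_angle q p r) = sqrt ((1 - p \<bullet> r) / (3 * (1 + p \<bullet> r)))"
proof -
  define x where "x = p \<bullet> r"
  have x: "-1 < x" "x < 1"
    using assms(6) by (auto simp: x_def)
  then have x2: "0 \<le> 1 - x^2"
    by (simp add: abs_square_le_1 abs_le_iff)
  have "cos (sph_angle q p r) = (1/2 - x/2) / (sqrt (3/4) * sqrt (1 - x^2))"
    using cos_sph_angle[OF assms(2,1,3)] assms(4,5)
    by (simp add: x_def inner_commute power2_eq_square)
  also have "\<dots> = sqrt ((1 - x) / (3 * (1 + x)))"
  proof (rule real_sqrt_unique[symmetric])
    have den: "(sqrt (3/4) * sqrt (1 - x^2))^2 = 3/4 * ((1 - x) * (1 + x))"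
      using x2 by (simp add: power_mult_distrib power2_eq_square algebra_simps)
    have num: "(1/2 - x/2)^2 = (1 - x) * (1 - x) / 4"
      by (simp add: power2_eq_square field_simps)
    show "((1/2 - x/2) / (sqrt (3/4) * sqrt (1 - x^2)))^2 = (1 - x) / (3 * (1 + x))"
      unfolding power_divide den num using x by (simp add: divide_simps)
    show "0 \<le> (1/2 - x/2) / (sqrt (3/4) * sqrt (1 - x^2))"
      using x x2 by (intro divide_nonneg_nonneg) auto
  qed
  finally show ?thesis
    by (simp add: x_def)
qed

lemma cos_angle_sum_obtuse_obtuse:
  assumes "cos A = sqrt (25/33)" "sin A = sqrt (8/33)" "cos B = sqrt (25/33)" "sin B = sqrt (8/33)"
    and "cos W = 113/275" "sin W = sqrt (1 - (113/275)^2)"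
  shows "-7/10 < cos (A + B + W) \<and> cos (A + B + W) < -1/3"
proof -
  define P :: real where "P = sqrt (8/33) * sqrt (25/33) * sqrt (1 - (113/275)^2)"
  have "cos (A + B + W) = 17/33 * (113/275) - 2 * P"
    using assms by (simp add: cos_add sin_add P_def algebra_simps)
  moreover have "3/10 < P" "P < 9/20"
    unfolding P_def real_sqrt_mult[symmetric]
    by (intro real_less_rsqrt real_less_lsqrt; simp add: power2_eq_square)+
  ultimately show ?thesis
    by simp
qed

lemma cos_angle_sum_acute_acute:
  assumes "cos A = sqrt (8/57)" "sin A = sqrt (49/57)" "cos B = sqrt (8/57)" "sin B = sqrt (49/57)"
    and "cos W = 487/1216" "sin W = sqrt (1 - (487/1216)^2)"
  shows "cos (A + B + W) < -6/7"
proof -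
  define P :: real where "P = sqrt (49/57) * sqrt (8/57) * sqrt (1 - (487/1216)^2)"
  have "cos (A + B + W) = -41/57 * (487/1216) - 2 * P"
    using assms by (simp add: cos_add sin_add P_def algebra_simps)
  moreover have "3/10 < P"
    unfolding P_def real_sqrt_mult[symmetric]
    by (intro real_less_rsqrt) (simp add: power2_eq_square)
  ultimately show ?thesis
    by simp
qed

lemma cos_angle_sum_obtuse_acute:
  assumes "cos A = sqrt (25/33)" "sin A = sqrt (8/33)" "cos B = sqrt (8/57)" "sin B = sqrt (49/57)"
    and "cos W = sqrt (128/209)" "sin W = sqrt (81/209)"
  shows "cos (A + B + W) = -451/627"
proof -
  have "sqrt (25/33) * sqrt (8/57) * sqrt (128/209) = (160/627::real)"
    "sqrt (8/33) * sqrt (49/57) * sqrt (128/209) = (224/627::real)"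
    "sqrt (8/33) * sqrt (8/57) * sqrt (81/209) = (72/627::real)"
    "sqrt (25/33) * sqrt (49/57) * sqrt (81/209) = (315/627::real)"
    unfolding real_sqrt_mult[symmetric] by (rule real_sqrt_unique; simp add: power2_eq_square)+
  then show ?thesis
    using assms by (simp add: cos_add sin_add algebra_simps)
qed

lemma cos_angle_sum_avoids_special_values:
  fixes a b A B W :: real
  assumes a: "a \<in> {-7/18, 11/27}" and b: "b \<in> {-7/18, 11/27}"
    and angles: "A \<in> {0..pi}" "B \<in> {0..pi}" "W \<in> {0..pi}"
    and cos: "cos A = sqrt ((1 - a) / (3 * (1 + a)))" "cos B = sqrt ((1 - b) / (3 * (1 + b)))"
      "cos W = (1/2 - a * b) / (sqrt (1 - a^2) * sqrt (1 - b^2))"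
  shows "cos (A + B + W) \<notin> {1/3, -7/9, -23/27, 17/81}"
proof -
  have sin: "sin x = sqrt (1 - (cos x)^2)" if "x \<in> {0..pi}" for x
    using that by (intro sin_cos_sqrt sin_ge_zero) auto
  have cos_W_mixed: "(1/2 - (-7/18) * (11/27)) / (sqrt (1 - (-7/18)^2) * sqrt (1 - (11/27)^2))
      = sqrt (128/209::real)"
    by (rule real_sqrt_unique[symmetric]) (simp_all add: power_divide power_mult_distrib)
  consider "a = -7/18" "b = -7/18" | "a = 11/27" "b = 11/27" | "a = -7/18" "b = 11/27"
    | "a = 11/27" "b = -7/18"
    using a b by blast
  then show ?thesis
  proof cases
    case 1
    then have "cos A = sqrt (25/33)" "cos B = sqrt (25/33)" "cos W = 113/275"
      using cos[unfolded 1] by (simp_all add: power2_eq_square)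
    then have "-7/10 < cos (A + B + W) \<and> cos (A + B + W) < -1/3"
      using sin angles by (intro cos_angle_sum_obtuse_obtuse) simp_all
    then show ?thesis
      by auto
  next
    case 2
    then have "cos A = sqrt (8/57)" "cos B = sqrt (8/57)" "cos W = 487/1216"
      using cos[unfolded 2] by (simp_all add: power2_eq_square)
    then have "cos (A + B + W) < -6/7"
      using sin angles by (intro cos_angle_sum_acute_acute) simp_all
    then show ?thesis
      by auto
  next
    case 3
    then have "cos A = sqrt (25/33)" "cos B = sqrt (8/57)" "cos W = sqrt (128/209)"
      using cos[unfolded 3] cos_W_mixed by simp_all
    then have "cos (A + B + W) = -451/627"
      using sin angles by (intro cos_angle_sum_obtuse_acute) simp_all
    then show ?thesis
      by auto
  next
    case 4
    then have "cos B = sqrt (25/33)" "cos A = sqrt (8/57)" "cos W = sqrt (128/209)"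
      using cos[unfolded 4] cos_W_mixed by (simp_all add: mult.commute)
    then have "cos (B + A + W) = -451/627"
      using sin angles by (intro cos_angle_sum_obtuse_acute) simp_all
    then show ?thesis
      by (auto simp: add.commute)
  qed
qed

lemma inner_diagonal_if_apex_angle_special:
  assumes "norm p = 1" "norm q = 1" "norm r = 1" "p \<bullet> q = 1/2" "q \<bullet> r = 1/2"
    and "sph_angle p q r \<in> {2*pi - real k * arccos (1/3) | k. k \<in> {3,4}}"
  shows "p \<bullet> r \<in> {-7/18, 11/27}"
proof -
  have "cos (sph_angle p q r) \<in> {-23/27, 17/81}"
    using assms(6) cos_multiples_arccos_one_third by auto
  then show ?thesis
    unfolding cos_apex_angle[OF assms(1-5)] by auto
qed

theorem lemma5:
  fixes p1 p2 p3 p4 p5 :: "real^3"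
  assumes on_sphere: "p1 \<in> S2" "p2 \<in> S2" "p3 \<in> S2" "p4 \<in> S2" "p5 \<in> S2"
    and sides: "sph_dist p1 p2 = pi/3" "sph_dist p2 p3 = pi/3" "sph_dist p3 p4 = pi/3"
               "sph_dist p4 p5 = pi/3" "sph_dist p5 p1 = pi/3"
    and diagonals: "sph_dist p1 p3 > pi/3" "sph_dist p1 p4 > pi/3"
    and alpha: "sph_angle p1 p2 p3 \<in> {2*pi - real k * arccos (1/3) | k. k \<in> {3,4}}"
    and beta: "sph_angle p1 p5 p4 \<in> {2*pi - real k * arccos (1/3) | k. k \<in> {3,4}}"
  shows "sph_angle p2 p1 p3 + sph_angle p4 p1 p5 + sph_angle p3 p1 p4
           \<notin> {2*pi - real k * arccos (1/3) | k. k \<in> {1,2,3,4}}"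
proof -
  have unit: "norm p1 = 1" "norm p2 = 1" "norm p3 = 1" "norm p4 = 1" "norm p5 = 1"
    using on_sphere by (auto simp: S2_def)
  have half: "p1 \<bullet> p2 = 1/2" "p2 \<bullet> p3 = 1/2" "p3 \<bullet> p4 = 1/2" "p5 \<bullet> p4 = 1/2" "p1 \<bullet> p5 = 1/2"
    using inner_eq_half_if_sph_dist_eq_pi_div_3[OF unit(1,2) sides(1)]
      inner_eq_half_if_sph_dist_eq_pi_div_3[OF unit(2,3) sides(2)]
      inner_eq_half_if_sph_dist_eq_pi_div_3[OF unit(3,4) sides(3)]
      inner_eq_half_if_sph_dist_eq_pi_div_3[OF unit(4,5) sides(4)]
      inner_eq_half_if_sph_dist_eq_pi_div_3[OF unit(5,1) sides(5)]
    by (simp_all add: inner_commute)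
  define a b where "a = p1 \<bullet> p3" and "b = p1 \<bullet> p4"
  have a: "a \<in> {-7/18, 11/27}" and b: "b \<in> {-7/18, 11/27}"
    unfolding a_def b_def
    using inner_diagonal_if_apex_angle_special[OF unit(1,2,3) half(1,2) alpha]
      inner_diagonal_if_apex_angle_special[OF unit(1,5,4) half(5,4) beta] .
  then have "\<bar>a\<bar> < 1" "\<bar>b\<bar> < 1"
    by auto
  then have "cos (sph_angle p2 p1 p3) = sqrt ((1 - a) / (3 * (1 + a)))"
    and "cos (sph_angle p4 p1 p5) = sqrt ((1 - b) / (3 * (1 + b)))"
    unfolding a_def b_def sph_angle_commute[of p4]
    by (simp_all only: cos_base_angle[OF unit(1,2,3) half(1,2)]
        cos_base_angle[OF unit(1,5,4) half(5,4)])
  moreover have "cos (sph_angle p3 p1 p4) = (1/2 - a * b) / (sqrt (1 - a^2) * sqrt (1 - b^2))"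
    using cos_sph_angle[of p3 p1 p4] unit half by (simp add: a_def b_def inner_commute)
  ultimately have "cos (sph_angle p2 p1 p3 + sph_angle p4 p1 p5 + sph_angle p3 p1 p4)
      \<notin> {1/3, -7/9, -23/27, 17/81}"
    using a b sph_angle_bounds by (intro cos_angle_sum_avoids_special_values) auto
  then show ?thesis
    using cos_of_special_angle by blast
qed

end
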